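(* Let $n\ge1$ and $\pi\in S_n$, and set $w=\hat\pi$. The following are equivalent: (a) $\pi\in\mathcal C_n(321)$; (b) $\hat\pi_1=n$ and $N_{2\,\underline{31}}(w)+N_{\underline{14}\,\underline{23}}(w)+N_{\underline{41}\,\underline{32}}(w)-N_{\underline{24}\,\underline{13}}(w)-N_{\underline{31}\,\underline{42}}(w)=0$; (c) $\hat\pi_1=n$ and $N_{\underline{231}}(w)+N_{\underline{23}\,\underline{41}}(w)+N_{\underline{24}\,\underline{31}}(w)+N_{\underline{32}\,\underline{41}}(w)+N_{\underline{14}\,\underline{23}}(w)+N_{\underline{41}\,\underline{32}}(w)-N_{\underline{24}\,\underline{13}}(w)=0$.
   Context: Permutations of $[n]$ are written in one-line notation $\pi=\pi_1\cdots\pi_n$. A permutation contains $321$ if there are $i<j<k$ with $\pi_i>\pi_j>\pi_k$. $\mathcal C_n$ is the set of cyclic permutations of $[n]$ (a single $n$-cycle), and $\mathcal C_n(321)$ those avoiding $321$. The standard cycle notation of $\pi$ writes each cycle with its largest element first, as $(m,\pi(m),\pi^2(m),\dots)$, and lists the cycles in increasing order of their largest elements. $\theta:S_n\to S_n$ sends $\pi$ to the permutation whose one-line notation is the standard cycle notation of $\pi$ with parentheses erased; $\hat\pi=\theta(\pi)$. Pattern counts, for a sequence $w=w_1\cdots w_N$ of distinct integers (all pairs $(i,j)$ below range over $i+2\le j\le N-1$ unless stated otherwise): $N_{2\,\underline{31}}(w)=\#\{(i,j):1\le i<j\le N-1,\ w_{j+1}<w_i<w_j\}$; $N_{\underline{231}}(w)=\#\{i: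 i+2\le N,\ w_{i+2}<w_i<w_{i+1}\}$; $N_{\underline{14}\,\underline{23}}(w)=\#\{(i,j): w_i<w_j<w_{j+1}<w_{i+1}\}$; $N_{\underline{41}\,\underline{32}}(w)=\#\{(i,j): w_{i+1}<w_{j+1}<w_j<w_i\}$; $N_{\underline{24}\,\underline{13}}(w)=\#\{(i,j): w_j<w_i<w_{j+1}<w_{i+1}\}$; $N_{\underline{31}\,\underline{42}}(w)=\#\{(i,j): w_{i+1}<w_{j+1}<w_i<w_j\}$; $N_{\underline{23}\,\underline{41}}(w)=\#\{(i,j): w_{j+1}<w_i<w_{i+1}<w_j\}$; $N_{\underline{24}\,\underline{31}}(w)=\#\{(i,j): w_{j+1}<w_i<w_j<w_{i+1}\}$; $N_{\underline{32}\,\underline{41}}(w)=\#\{(i,j): w_{j+1}<w_{i+1}<w_i<w_j\}$. *)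

theory Defs
  imports "HOL-Combinatorics.Permutations"
begin

(* Permutations of [n] are functions p :: nat => nat with p permutes {1..n};
   the one-line notation is p 1, p 2, ..., p n. *)

definition contains_321 :: "nat \<Rightarrow> (nat \<Rightarrow> nat) \<Rightarrow> bool" where
  "contains_321 n p \<longleftrightarrow>
     (\<exists>i j k. 1 \<le> i \<and> i < j \<and> j < k \<and> k \<le> n \<and> p i > p j \<and> p j > p k)"

definition cyclic_perm :: "nat \<Rightarrow> (nat \<Rightarrow> nat) \<Rightarrow> bool" where
  "cyclic_perm n p \<longleftrightarrow> p permutes {1..n} \<and>
     (\<forall>x\<in>{1..n}. \<forall>y\<in>{1..n}. \<exists>k. (p ^^ k) x = y)"

definition cyc_len :: "(nat \<Rightarrow> nat) \<Rightarrow> nat \<Rightarrow> nat" where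
  "cyc_len p m = (LEAST k. 0 < k \<and> (p ^^ k) m = m)"

definition cycle_list :: "(nat \<Rightarrow> nat) \<Rightarrow> nat \<Rightarrow> nat list" where
  "cycle_list p m = map (\<lambda>k. (p ^^ k) m) [0..<cyc_len p m]"

definition cycle_maxima :: "nat \<Rightarrow> (nat \<Rightarrow> nat) \<Rightarrow> nat set" where
  "cycle_maxima n p = {m \<in> {1..n}. \<forall>k. (p ^^ k) m \<le> m}"

(* theta(p): standard cycle notation with parentheses erased, as a list *)
definition theta :: "nat \<Rightarrow> (nat \<Rightarrow> nat) \<Rightarrow> nat list" where
  "theta n p = concat (map (cycle_list p) (sorted_list_of_set (cycle_maxima n p)))"

(* Pattern counts. The list w = w_1 ... w_N is stored 0-based: w_i = w ! (i-1).
   Pairs (i,j) with i+2 <= j <= N-1 (1-based) become (a,b) with a+2 <= b, b+1 < N. *)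

definition N_2_31 :: "nat list \<Rightarrow> nat" where
  "N_2_31 w = card {(a,b). a < b \<and> b + 1 < length w \<and> w!(b+1) < w!a \<and> w!a < w!b}"

definition N_231 :: "nat list \<Rightarrow> nat" where
  "N_231 w = card {a. a + 2 < length w \<and> w!(a+2) < w!a \<and> w!a < w!(a+1)}"

definition pairs2 :: "nat list \<Rightarrow> (nat \<Rightarrow> nat \<Rightarrow> bool) \<Rightarrow> nat" where
  "pairs2 w P = card {(a,b). a + 2 \<le> b \<and> b + 1 < length w \<and> P a b}"

definition N_14_23 :: "nat list \<Rightarrow> nat" where
  "N_14_23 w = pairs2 w (\<lambda>i j. w!i < w!j \<and> w!j < w!(j+1) \<and> w!(j+1) < w!(i+1))"

definition N_41_32 :: "nat list \<Rightarrow> nat" where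
  "N_41_32 w = pairs2 w (\<lambda>i j. w!(i+1) < w!(j+1) \<and> w!(j+1) < w!j \<and> w!j < w!i)"

definition N_24_13 :: "nat list \<Rightarrow> nat" where
  "N_24_13 w = pairs2 w (\<lambda>i j. w!j < w!i \<and> w!i < w!(j+1) \<and> w!(j+1) < w!(i+1))"

definition N_31_42 :: "nat list \<Rightarrow> nat" where
  "N_31_42 w = pairs2 w (\<lambda>i j. w!(i+1) < w!(j+1) \<and> w!(j+1) < w!i \<and> w!i < w!j)"

definition N_23_41 :: "nat list \<Rightarrow> nat" where
  "N_23_41 w = pairs2 w (\<lambda>i j. w!(j+1) < w!i \<and> w!i < w!(i+1) \<and> w!(i+1) < w!j)"

definition N_24_31 :: "nat list \<Rightarrow> nat" where
  "N_24_31 w = pairs2 w (\<lambda>i j. w!(j+1) < w!i \<and> w!i < w!j \<and> w!j < w!(i+1))"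

definition N_32_41 :: "nat list \<Rightarrow> nat" where
  "N_32_41 w = pairs2 w (\<lambda>i j. w!(j+1) < w!(i+1) \<and> w!(i+1) < w!i \<and> w!i < w!j)"

end

(* When theta(p) begins with n, the only cycle maximum of p is n, so p is an n-cycle and
   theta(p) = n p(n) p^2(n) ... p^(n-1)(n); then the cyclically consecutive letters of
   w = theta(p) are exactly the arcs x |-> p(x) of p. Both alternating pattern sums count the pairs
   of nested arcs pointing in the same direction. Comparing the relative order of two disjoint
   adjacent pairs of w, the pattern sum equals the number of nested pairs among the arcs
   w_i |-> w_(i+1) plus a correction term; the correction telescopes along the second pair and leaves
   exactly the ascents nested under the closing arc w_N |-> w_1. Finally, a permutation without
   fixed points contains 321 iff two of its arcs pointing in the same direction are nested, and an
   n-cycle with n >= 2 has no fixed points. *)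

theory Submission
  imports Defs "HOL-Combinatorics.Orbits"
begin

section \<open>Nested arcs in a word\<close>

(* Two right-pointing
   arcs are listed outer arc first, two left-pointing arcs inner arc first, so that each unordered
   nested pair is counted once. *)
definition nested_arcs :: "nat \<Rightarrow> nat \<Rightarrow> nat \<Rightarrow> nat \<Rightarrow> bool" where
  "nested_arcs x x' y y' \<longleftrightarrow> (x < y \<and> y < y' \<and> y' < x') \<or> (y' < x' \<and> x' < x \<and> x < y)"

definition nested_at :: "nat list \<Rightarrow> nat \<Rightarrow> nat \<Rightarrow> bool" where
  "nested_at w a b \<longleftrightarrow> nested_arcs (w ! a) (w ! (a + 1)) (w ! b) (w ! (b + 1))"

definition linear_nestings :: "nat list \<Rightarrow> (nat \<times> nat) set" where
  "linear_nestings w = {(a, b). a + 1 < length w \<and> b + 1 < length w \<and> nested_at w a b}"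

definition cyclic_nestings :: "nat list \<Rightarrow> (nat \<times> nat) set" where
  "cyclic_nestings w = {(a, b). a < length w \<and> b < length w \<and>
     nested_arcs (w ! a) (w ! ((a + 1) mod length w)) (w ! b) (w ! ((b + 1) mod length w))}"

definition ascents_above_last :: "nat list \<Rightarrow> nat set" where
  "ascents_above_last w = {a. a + 1 < length w \<and> w ! (length w - 1) < w ! a \<and> w ! a < w ! (a + 1)}"

definition occurs_231_at :: "nat list \<Rightarrow> nat \<Rightarrow> bool" where
  "occurs_231_at w a \<longleftrightarrow> a + 2 < length w \<and> w ! (a + 2) < w ! a \<and> w ! a < w ! (a + 1)"

lemma int_card_lessThan_filter:
  "int (card {a. a < (N::nat) \<and> P a}) = (\<Sum>a<N. of_bool (P a))"
proof -
  have "{a. a < N \<and> P a} = {..<N} \<inter> {a. P a}"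
    by auto
  moreover have "(\<Sum>a<N. of_bool (P a)) = int (card ({..<N} \<inter> {a. P a}))"
    by (rule sum_of_bool_eq) simp_all
  ultimately show ?thesis
    by simp
qed

lemma int_card_lessThan_filter2:
  "int (card {(a, b). a < (N::nat) \<and> b < N \<and> P a b}) = (\<Sum>a<N. \<Sum>b<N. of_bool (P a b))"
proof -
  have "{(a, b). a < N \<and> b < N \<and> P a b} = ({..<N} \<times> {..<N}) \<inter> {x. P (fst x) (snd x)}"
    by auto
  moreover have "(\<Sum>x \<in> {..<N} \<times> {..<N}. of_bool (P (fst x) (snd x))) =
      int (card (({..<N} \<times> {..<N}) \<inter> {x. P (fst x) (snd x)}))"
    by (rule sum_of_bool_eq) simp_all
  ultimately show ?thesis
    by (simp only: sum.cartesian_product split_def)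
qed

lemma int_pairs2:
  "int (pairs2 w P) =
     (\<Sum>a<length w. \<Sum>b<length w. of_bool (a + 2 \<le> b \<and> b + 1 < length w) * of_bool (P a b))"
proof -
  have "{(a, b). a + 2 \<le> b \<and> b + 1 < length w \<and> P a b} =
      {(a, b). a < length w \<and> b < length w \<and> (a + 2 \<le> b \<and> b + 1 < length w) \<and> P a b}"
    by auto
  then show ?thesis
    unfolding pairs2_def by (simp only: int_card_lessThan_filter2 of_bool_conj)
qed

lemma int_N_231: "int (N_231 w) = (\<Sum>a<length w. of_bool (occurs_231_at w a))"
proof -
  have "{a. a + 2 < length w \<and> w ! (a + 2) < w ! a \<and> w ! a < w ! (a + 1)} =
      {a. a < length w \<and> occurs_231_at w a}"
    by (auto simp: occurs_231_at_def)
  then show ?thesis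
    unfolding N_231_def by (simp only: int_card_lessThan_filter)
qed

lemma sum_window_telescope:
  fixes f :: "nat \<Rightarrow> int"
  shows "(\<Sum>b<N. of_bool (a + 2 \<le> b \<and> b + 1 < N) * (f b - f (b + 1))) =
    (if a + 2 < N then f (a + 2) - f (N - 1) else 0)"
proof (cases "a + 2 < N")
  case True
  have "(\<Sum>b<N. of_bool (a + 2 \<le> b \<and> b + 1 < N) * (f b - f (b + 1))) =
      (\<Sum>b \<in> {a + 2..<N - 1}. f b - f (Suc b))"
    by (rule sum.mono_neutral_cong_right) auto
  also have "\<dots> = - (\<Sum>b \<in> {a + 2..<N - 1}. f (Suc b) - f b)"
    by (simp add: sum_negf[symmetric])
  also have "\<dots> = f (a + 2) - f (N - 1)"
    using True by (simp add: sum_Suc_diff')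
  finally show ?thesis
    using True by simp
qed simp

(* As w ! 0 is the largest letter, the closing arc from the last letter to w ! 0 encloses exactly
   the ascents above the last letter and is enclosed by no arc. *)
lemma cyclic_nestings_eq:
  assumes head_max: "\<And>k. 0 < k \<Longrightarrow> k < length w \<Longrightarrow> w ! k < w ! 0"
  shows "cyclic_nestings w = linear_nestings w \<union> {length w - 1} \<times> ascents_above_last w"
proof -
  let ?N = "length w"
  have le_head: "w ! k \<le> w ! 0" if "k < ?N" for k
    using head_max[of k] that by (cases "k = 0") auto
  have "(a, b) \<in> cyclic_nestings w \<longleftrightarrow>
      (a, b) \<in> linear_nestings w \<or> (a = ?N - 1 \<and> b \<in> ascents_above_last w)" for a b
  proof -
    consider "a + 1 < ?N" "b + 1 < ?N" | "a + 1 = ?N" "b + 1 < ?N" | "b + 1 = ?N" "a < ?N"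
      | "?N \<le> a \<or> ?N \<le> b"
      by linarith
    then show ?thesis
    proof cases
      case 1
      then show ?thesis
        unfolding cyclic_nestings_def linear_nestings_def nested_at_def by auto
    next
      case 2
      then have "(a + 1) mod ?N = 0" "a = ?N - 1"
        by auto
      moreover have "w ! (b + 1) < w ! 0" "w ! (?N - 1) \<le> w ! 0"
        using 2 head_max[of "b + 1"] le_head[of "?N - 1"] by simp_all
      ultimately show ?thesis
        using 2 unfolding cyclic_nestings_def linear_nestings_def ascents_above_last_def nested_arcs_def
        by auto
    next
      case 3
      then have "(b + 1) mod ?N = 0"
        by simp
      moreover have "w ! ((a + 1) mod ?N) \<le> w ! 0"
        using 3 by (intro le_head mod_less_divisor) auto
      ultimately show ?thesis
        using 3 unfolding cyclic_nestings_def linear_nestings_def ascents_above_last_def nested_arcs_def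
        by auto
    next
      case 4
      then show ?thesis
        unfolding cyclic_nestings_def linear_nestings_def ascents_above_last_def by auto
    qed
  qed
  then show ?thesis
    by auto
qed

lemma finite_cyclic_nestings: "finite (cyclic_nestings w)"
  by (rule finite_subset[of _ "{..<length w} \<times> {..<length w}"]) (auto simp: cyclic_nestings_def)

lemma card_cyclic_nestings:
  assumes "\<And>k. 0 < k \<Longrightarrow> k < length w \<Longrightarrow> w ! k < w ! 0"
  shows "card (cyclic_nestings w) = card (linear_nestings w) + card (ascents_above_last w)"
proof -
  have "finite (linear_nestings w)"
    by (rule finite_subset[of _ "{..<length w} \<times> {..<length w}"]) (auto simp: linear_nestings_def)
  moreover have "finite (ascents_above_last w)"
    by (rule finite_subset[of _ "{..<length w}"]) (auto simp: ascents_above_last_def)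
  moreover have "linear_nestings w \<inter> {length w - 1} \<times> ascents_above_last w = {}"
    by (auto simp: linear_nestings_def)
  ultimately show ?thesis
    by (simp add: cyclic_nestings_eq[OF assms] card_Un_disjoint card_cartesian_product_singleton)
qed

lemma int_card_linear_nestings:
  "int (card (linear_nestings w)) = (\<Sum>a<length w. \<Sum>b<length w.
     of_bool (a + 2 \<le> b \<and> b + 1 < length w) * (of_bool (nested_at w a b) + of_bool (nested_at w b a)))"
proof -
  let ?N = "length w"
  define R where "R a b \<longleftrightarrow> a + 2 \<le> b \<and> b + 1 < ?N" for a b
  define nest :: "nat \<Rightarrow> nat \<Rightarrow> int" where "nest a b = of_bool (nested_at w a b)" for a b
  have "linear_nestings w = {(a, b). a < ?N \<and> b < ?N \<and> a + 1 < ?N \<and> b + 1 < ?N \<and> nested_at w a b}"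
    unfolding linear_nestings_def by auto
  then have "int (card (linear_nestings w)) =
      (\<Sum>a<?N. \<Sum>b<?N. of_bool (a + 1 < ?N \<and> b + 1 < ?N \<and> nested_at w a b))"
    by (simp only: int_card_lessThan_filter2)
  also have "\<dots> = (\<Sum>a<?N. \<Sum>b<?N. of_bool (R a b) * nest a b + of_bool (R b a) * nest a b)"
  proof (intro sum.cong refl)
    fix a b
    \<comment> \<open>arcs at equal or adjacent positions are never nested\<close>
    consider "R a b" | "R b a" | "a + 1 < ?N \<longrightarrow> b + 1 < ?N \<longrightarrow> b = a \<or> b = a + 1 \<or> a = b + 1"
      unfolding R_def by linarith
    then show "of_bool (a + 1 < ?N \<and> b + 1 < ?N \<and> nested_at w a b) =
        of_bool (R a b) * nest a b + of_bool (R b a) * nest a b"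
      by cases (auto simp: R_def nest_def nested_at_def nested_arcs_def)
  qed
  also have "\<dots> = (\<Sum>a<?N. \<Sum>b<?N. of_bool (R a b) * nest a b)
      + (\<Sum>a<?N. \<Sum>b<?N. of_bool (R b a) * nest a b)"
    by (simp only: sum.distrib)
  also have "(\<Sum>a<?N. \<Sum>b<?N. of_bool (R b a) * nest a b) =
      (\<Sum>a<?N. \<Sum>b<?N. of_bool (R a b) * nest b a)"
    by (rule sum.swap)
  finally show ?thesis
    unfolding R_def nest_def by (simp only: sum.distrib[symmetric] ring_distribs)
qed

(* Contribution of the adjacent pairs x x' and y y' of a word, the first one strictly before the
   second, to the patterns 23-41, 24-31, 32-41, 14-23, 41-32 and, negatively, 24-13. *)
definition arc_pair_weight :: "nat \<Rightarrow> nat \<Rightarrow> nat \<Rightarrow> nat \<Rightarrow> int" where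
  "arc_pair_weight x x' y y' =
     of_bool (y' < x \<and> x < x' \<and> x' < y) + of_bool (y' < x \<and> x < y \<and> y < x')
     + of_bool (y' < x' \<and> x' < x \<and> x < y) + of_bool (x < y \<and> y < y' \<and> y' < x')
     + of_bool (x' < y' \<and> y' < y \<and> y < x) - of_bool (y < x \<and> x < y' \<and> y' < x')"

lemma arc_pair_weight_eq:
  assumes "distinct [x, x', y, y']"
  shows "arc_pair_weight x x' y y' =
    of_bool (nested_arcs x x' y y') + of_bool (nested_arcs y y' x x')
    + of_bool (x < x') * (of_bool (x < y) - of_bool (x < y'))"
  using assms unfolding arc_pair_weight_def nested_arcs_def
  by (cases "x < x'"; cases "x < y"; cases "x < y'"; cases "x' < y"; cases "x' < y'"; cases "y < y'") auto

lemma pattern_counts_eq_sum_arc_pair_weight: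
  "int (N_23_41 w) + int (N_24_31 w) + int (N_32_41 w) + int (N_14_23 w) + int (N_41_32 w)
      - int (N_24_13 w)
    = (\<Sum>a<length w. \<Sum>b<length w. of_bool (a + 2 \<le> b \<and> b + 1 < length w) *
         arc_pair_weight (w ! a) (w ! (a + 1)) (w ! b) (w ! (b + 1)))"
  unfolding N_23_41_def N_24_31_def N_32_41_def N_14_23_def N_41_32_def N_24_13_def
    int_pairs2 arc_pair_weight_def
  by (simp add: sum.distrib sum_subtractf ring_distribs conj_commute
      del: sum_of_bool_eq sum_of_bool_mult_eq sum_mult_of_bool_eq)

(* The correction term of arc_pair_weight_eq telescopes along b; together with a 231 starting at a
   it leaves exactly the indicator of a being an ascent above the last letter. *)
lemma arc_pair_weight_row_sum:
  assumes dist: "distinct w" and a: "a < length w"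
  defines "R b \<equiv> a + 2 \<le> b \<and> b + 1 < length w"
  shows "of_bool (occurs_231_at w a)
      + (\<Sum>b<length w. of_bool (R b) * arc_pair_weight (w ! a) (w ! (a + 1)) (w ! b) (w ! (b + 1)))
    = (\<Sum>b<length w. of_bool (R b) * (of_bool (nested_at w a b) + of_bool (nested_at w b a)))
      + of_bool (a \<in> ascents_above_last w)"
proof -
  let ?N = "length w"
  define above :: "nat \<Rightarrow> int" where "above b = of_bool (w ! a < w ! b)" for b
  define nest :: "nat \<Rightarrow> int"
    where "nest b = of_bool (nested_at w a b) + of_bool (nested_at w b a)" for b
  define ascent :: int where "ascent = of_bool (w ! a < w ! (a + 1))"
  have "of_bool (R b) * arc_pair_weight (w ! a) (w ! (a + 1)) (w ! b) (w ! (b + 1)) =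
      of_bool (R b) * nest b + ascent * (of_bool (R b) * (above b - above (b + 1)))" for b
  proof (cases "R b")
    case True
    then have "distinct [w ! a, w ! (a + 1), w ! b, w ! (b + 1)]"
      using dist unfolding R_def by (auto simp: nth_eq_iff_index_eq)
    then show ?thesis
      using True by (simp add: arc_pair_weight_eq nest_def nested_at_def above_def ascent_def)
  qed simp
  then have "(\<Sum>b<?N. of_bool (R b) * arc_pair_weight (w ! a) (w ! (a + 1)) (w ! b) (w ! (b + 1))) =
      (\<Sum>b<?N. of_bool (R b) * nest b) + ascent * (\<Sum>b<?N. of_bool (R b) * (above b - above (b + 1)))"
    by (simp add: sum.distrib sum_distrib_left del: sum_of_bool_mult_eq)
  also have "(\<Sum>b<?N. of_bool (R b) * (above b - above (b + 1))) =
      (if a + 2 < ?N then above (a + 2) - above (?N - 1) else 0)"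
    unfolding R_def by (rule sum_window_telescope)
  finally have row: "(\<Sum>b<?N. of_bool (R b) * arc_pair_weight (w ! a) (w ! (a + 1)) (w ! b) (w ! (b + 1)))
      = (\<Sum>b<?N. of_bool (R b) * nest b)
        + ascent * (if a + 2 < ?N then above (a + 2) - above (?N - 1) else 0)" .
  have "of_bool (occurs_231_at w a) + ascent * (if a + 2 < ?N then above (a + 2) - above (?N - 1) else 0)
      = of_bool (a \<in> ascents_above_last w)"
  proof (cases "a + 2 < ?N")
    case True
    then have "w ! (a + 2) \<noteq> w ! a" "w ! (?N - 1) \<noteq> w ! a"
      using dist by (auto simp: nth_eq_iff_index_eq)
    then show ?thesis
      using True unfolding occurs_231_at_def above_def ascent_def ascents_above_last_def by auto
  next
    case False
    then have "a + 1 = ?N \<or> ?N - 1 = a + 1"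
      using a by auto
    then show ?thesis
      using False unfolding occurs_231_at_def ascents_above_last_def by auto
  qed
  then show ?thesis
    unfolding row nest_def by simp
qed

lemma statistic_c_eq_linear_nestings:
  assumes "distinct w"
  shows "int (N_231 w) + int (N_23_41 w) + int (N_24_31 w) + int (N_32_41 w)
      + int (N_14_23 w) + int (N_41_32 w) - int (N_24_13 w)
    = int (card (linear_nestings w)) + int (card (ascents_above_last w))"
proof -
  let ?N = "length w"
  have "int (N_231 w) + int (N_23_41 w) + int (N_24_31 w) + int (N_32_41 w)
      + int (N_14_23 w) + int (N_41_32 w) - int (N_24_13 w)
    = (\<Sum>a<?N. of_bool (occurs_231_at w a) + (\<Sum>b<?N. of_bool (a + 2 \<le> b \<and> b + 1 < ?N) *
          arc_pair_weight (w ! a) (w ! (a + 1)) (w ! b) (w ! (b + 1))))"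
    unfolding sum.distrib using int_N_231[of w] pattern_counts_eq_sum_arc_pair_weight[of w] by linarith
  also have "\<dots> = (\<Sum>a<?N. (\<Sum>b<?N. of_bool (a + 2 \<le> b \<and> b + 1 < ?N) *
        (of_bool (nested_at w a b) + of_bool (nested_at w b a))) + of_bool (a \<in> ascents_above_last w))"
    using arc_pair_weight_row_sum[OF assms] by (intro sum.cong) auto
  also have "\<dots> = int (card (linear_nestings w)) + (\<Sum>a<?N. of_bool (a \<in> ascents_above_last w))"
    unfolding int_card_linear_nestings by (simp only: sum.distrib)
  also have "(\<Sum>a<?N. of_bool (a \<in> ascents_above_last w)) = int (card (ascents_above_last w))"
  proof -
    have "ascents_above_last w = {a. a < ?N \<and> a \<in> ascents_above_last w}"
      unfolding ascents_above_last_def by auto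
    then show ?thesis
      by (metis int_card_lessThan_filter)
  qed
  finally show ?thesis .
qed

lemma split_2_31_by_middle:
  fixes x x' y y' :: nat
  assumes "distinct [x, x', y, y']"
  shows "(of_bool (y' < x \<and> x < y) :: int) =
    of_bool (y' < x \<and> x < x' \<and> x' < y) + of_bool (y' < x \<and> x < y \<and> y < x')
    + of_bool (y' < x' \<and> x' < x \<and> x < y) + of_bool (x' < y' \<and> y' < x \<and> x < y)"
  using assms by (cases "x' < y'"; cases "x' < x"; cases "x' < y") auto

lemma N_2_31_eq:
  assumes dist: "distinct w"
  shows "N_2_31 w = N_231 w + N_23_41 w + N_24_31 w + N_32_41 w + N_31_42 w"
proof -
  let ?N = "length w"
  define R where "R a b \<longleftrightarrow> a + 2 \<le> b \<and> b + 1 < ?N" for a b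
  \<comment> \<open>for b = a + 1 this is a 231 starting at a, otherwise split by the position of w ! (a + 1)\<close>
  have split: "of_bool (a < b \<and> b + 1 < ?N \<and> w ! (b + 1) < w ! a \<and> w ! a < w ! b) =
      of_bool (b = Suc a \<and> occurs_231_at w a) + of_bool (R a b) *
        (of_bool (w ! (b + 1) < w ! a \<and> w ! a < w ! (a + 1) \<and> w ! (a + 1) < w ! b)
         + of_bool (w ! (b + 1) < w ! a \<and> w ! a < w ! b \<and> w ! b < w ! (a + 1))
         + of_bool (w ! (b + 1) < w ! (a + 1) \<and> w ! (a + 1) < w ! a \<and> w ! a < w ! b)
         + of_bool (w ! (a + 1) < w ! (b + 1) \<and> w ! (b + 1) < w ! a \<and> w ! a < w ! b) :: int)"
    for a b
  proof (cases "R a b")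
    case True
    then have "distinct [w ! a, w ! (a + 1), w ! b, w ! (b + 1)]"
      using dist unfolding R_def by (auto simp: nth_eq_iff_index_eq)
    then show ?thesis
      using True split_2_31_by_middle unfolding R_def by auto
  next
    case False
    then show ?thesis
      unfolding R_def occurs_231_at_def by (cases "b = a + 1") auto
  qed
  have adjacent: "(\<Sum>b<?N. of_bool (b = Suc a \<and> occurs_231_at w a)) = (of_bool (occurs_231_at w a) :: int)"
    for a
  proof -
    have "(\<Sum>b<?N. of_bool (b = Suc a \<and> occurs_231_at w a)) =
        (\<Sum>b<?N. if b = Suc a then of_bool (occurs_231_at w a) else (0 :: int))"
      by (intro sum.cong) auto
    then show ?thesis
      unfolding occurs_231_at_def by (simp add: sum.delta')
  qed
  have "{(a, b). a < b \<and> b + 1 < ?N \<and> w ! (b + 1) < w ! a \<and> w ! a < w ! b} =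
      {(a, b). a < ?N \<and> b < ?N \<and> a < b \<and> b + 1 < ?N \<and> w ! (b + 1) < w ! a \<and> w ! a < w ! b}"
    by auto
  then have "int (N_2_31 w) =
      (\<Sum>a<?N. \<Sum>b<?N. of_bool (a < b \<and> b + 1 < ?N \<and> w ! (b + 1) < w ! a \<and> w ! a < w ! b))"
    unfolding N_2_31_def by (simp only: int_card_lessThan_filter2)
  also have "\<dots> = int (N_231 w) + int (N_23_41 w) + int (N_24_31 w) + int (N_32_41 w) + int (N_31_42 w)"
    unfolding split int_N_231 N_23_41_def N_24_31_def N_32_41_def N_31_42_def int_pairs2 R_def
    by (simp add: sum.distrib ring_distribs adjacent
        del: sum_of_bool_eq sum_of_bool_mult_eq sum_mult_of_bool_eq)
  finally show ?thesis
    by linarith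
qed

lemma statistics_eq_card_cyclic_nestings:
  assumes dist: "distinct w" and head_max: "\<And>k. 0 < k \<Longrightarrow> k < length w \<Longrightarrow> w ! k < w ! 0"
  shows "int (N_2_31 w) + int (N_14_23 w) + int (N_41_32 w) - int (N_24_13 w) - int (N_31_42 w)
      = int (card (cyclic_nestings w))"
    and "int (N_231 w) + int (N_23_41 w) + int (N_24_31 w) + int (N_32_41 w)
      + int (N_14_23 w) + int (N_41_32 w) - int (N_24_13 w) = int (card (cyclic_nestings w))"
proof -
  show "int (N_231 w) + int (N_23_41 w) + int (N_24_31 w) + int (N_32_41 w)
      + int (N_14_23 w) + int (N_41_32 w) - int (N_24_13 w) = int (card (cyclic_nestings w))"
    using statistic_c_eq_linear_nestings[OF dist] card_cyclic_nestings[OF head_max] by simp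
  then show "int (N_2_31 w) + int (N_14_23 w) + int (N_41_32 w) - int (N_24_13 w) - int (N_31_42 w)
      = int (card (cyclic_nestings w))"
    using N_2_31_eq[OF dist] by simp
qed

section \<open>The word theta of an n-cycle\<close>

lemma cyc_len_eq_funpow_dist1:
  assumes "permutation p"
  shows "cyc_len p x = funpow_dist1 p x x"
proof -
  obtain k where "0 < k" "(p ^^ k) x = x"
    using permutation_self[OF assms] by blast
  then show ?thesis
    unfolding cyc_len_def funpow_dist_def by (subst Least_Suc) (auto simp: funpow_swap1)
qed

lemma funpow_cyc_len:
  assumes "permutation p"
  shows "(p ^^ cyc_len p x) x = x"
  unfolding cyc_len_eq_funpow_dist1[OF assms]
  by (rule funpow_dist1_prop[OF permutation_self_in_orbit[OF assms]])

lemma bij_betw_funpow_orbit: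
  assumes "permutation p"
  shows "bij_betw (\<lambda>k. (p ^^ k) x) {..<cyc_len p x} (orbit p x)"
  unfolding bij_betw_def cyc_len_eq_funpow_dist1[OF assms] lessThan_atLeast0
  using inj_on_funpow_dist1 orbit_conv_funpow_dist1 permutation_self_in_orbit[OF assms] by metis

lemma cyclic_perm_iff_orbit:
  assumes perm: "p permutes {1..n}" and x: "x \<in> {1..n}"
  shows "cyclic_perm n p \<longleftrightarrow> orbit p x = {1..n}"
proof -
  have permutation: "permutation p"
    using perm by (auto simp: permutation_permutes)
  have reach: "(\<exists>k. (p ^^ k) a = b) \<longleftrightarrow> b \<in> orbit p a" for a b
    by (auto simp: orbit_altdef_permutation[OF permutation])
  show ?thesis
  proof
    assume "cyclic_perm n p"
    then show "orbit p x = {1..n}"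
      using permutes_orbit_subset[OF perm x] x unfolding cyclic_perm_def reach by blast
  next
    assume orbit_x: "orbit p x = {1..n}"
    have "orbit p a = {1..n}" if "a \<in> {1..n}" for a
      using orbit_cyclic_eq3[OF cyclic_on_orbit'[OF permutation]] that orbit_x by blast
    then show "cyclic_perm n p"
      unfolding cyclic_perm_def reach using perm by blast
  qed
qed

lemma cycle_maxima_eq:
  assumes "permutation p"
  shows "cycle_maxima n p = {m \<in> {1..n}. \<forall>y \<in> orbit p m. y \<le> m}"
  unfolding cycle_maxima_def orbit_altdef_permutation[OF assms] by blast

lemma Max_orbit_in_cycle_maxima:
  assumes perm: "p permutes {1..n}" and x: "x \<in> {1..n}"
  shows "Max (orbit p x) \<in> cycle_maxima n p \<inter> orbit p x"
proof -
  let ?M = "Max (orbit p x)"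
  have permutation: "permutation p"
    using perm by (auto simp: permutation_permutes)
  have sub: "orbit p x \<subseteq> {1..n}"
    using permutes_orbit_subset[OF perm x] .
  then have finite: "finite (orbit p x)"
    by (rule finite_subset) simp
  then have M: "?M \<in> orbit p x"
    using orbit_nonempty by (rule Max_in)
  then have "orbit p ?M = orbit p x"
    by (rule orbit_cyclic_eq3[OF cyclic_on_orbit'[OF permutation]])
  then show ?thesis
    using M sub finite by (auto simp: cycle_maxima_eq[OF permutation])
qed

lemma cycle_maxima_eq_singleton_iff:
  assumes perm: "p permutes {1..n}" and n: "1 \<le> n"
  shows "cycle_maxima n p = {n} \<longleftrightarrow> orbit p n = {1..n}"
proof -
  have permutation: "permutation p"
    using perm by (auto simp: permutation_permutes)
  have orbit_eq: "orbit p y = orbit p x" if "y \<in> orbit p x" for x y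
    using orbit_cyclic_eq3[OF cyclic_on_orbit'[OF permutation] that] .
  show ?thesis
  proof
    assume maxima: "cycle_maxima n p = {n}"
    have "x \<in> orbit p n" if x: "x \<in> {1..n}" for x
    proof -
      have "n \<in> orbit p x"
        using Max_orbit_in_cycle_maxima[OF perm x] maxima by force
      then show ?thesis
        using orbit_eq permutation_self_in_orbit[OF permutation, of x] by blast
    qed
    then show "orbit p n = {1..n}"
      using permutes_orbit_subset[OF perm, of n] n by auto
  next
    assume orbit_n: "orbit p n = {1..n}"
    have "m = n" if m: "m \<in> cycle_maxima n p" for m
    proof -
      have "m \<in> orbit p n" "m \<le> n"
        using m orbit_n by (auto simp: cycle_maxima_eq[OF permutation])
      then have "n \<in> orbit p m"
        using orbit_eq[of m n] orbit_n n by simp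
      then show "m = n"
        using m \<open>m \<le> n\<close> by (auto simp: cycle_maxima_eq[OF permutation])
    qed
    moreover have "n \<in> cycle_maxima n p"
      using n orbit_n by (auto simp: cycle_maxima_eq[OF permutation])
    ultimately show "cycle_maxima n p = {n}"
      by blast
  qed
qed

lemma theta_nth_0:
  assumes perm: "p permutes {1..n}" and n: "1 \<le> n"
  shows "theta n p ! 0 = Min (cycle_maxima n p)"
proof -
  let ?M = "cycle_maxima n p"
  have permutation: "permutation p"
    using perm by (auto simp: permutation_permutes)
  have "n \<in> ?M"
    using n permutes_in_funpow_image[OF perm, of n] by (auto simp: cycle_maxima_def)
  moreover have "finite ?M"
    by (simp add: cycle_maxima_def)
  moreover have "0 < cyc_len p (Min ?M)"
    by (simp add: cyc_len_eq_funpow_dist1[OF permutation])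
  then have "cycle_list p (Min ?M) ! 0 = Min ?M" "cycle_list p (Min ?M) \<noteq> []"
    by (simp_all add: cycle_list_def)
  ultimately show ?thesis
    unfolding theta_def by (subst sorted_list_of_set_nonempty) (auto simp: nth_append)
qed

lemma theta_nth_0_eq_iff_cyclic:
  assumes perm: "p permutes {1..n}" and n: "1 \<le> n"
  shows "theta n p ! 0 = n \<longleftrightarrow> cyclic_perm n p"
proof -
  let ?M = "cycle_maxima n p"
  have n_max: "n \<in> ?M" and finite: "finite ?M" and bounded: "?M \<subseteq> {..n}"
    using n permutes_in_funpow_image[OF perm, of n] by (auto simp: cycle_maxima_def)
  have "Min ?M = n \<longleftrightarrow> ?M = {n}"
  proof
    assume "Min ?M = n"
    then have "m = n" if "m \<in> ?M" for m
      using Min_le[OF finite that] bounded that by auto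
    then show "?M = {n}"
      using n_max by blast
  qed simp
  then show ?thesis
    using cyclic_perm_iff_orbit[OF perm, of n] n
    by (simp add: theta_nth_0[OF perm n] cycle_maxima_eq_singleton_iff[OF perm n])
qed

lemma cyc_len_cyclic:
  assumes perm: "p permutes {1..n}" and n: "1 \<le> n" and cyclic: "cyclic_perm n p"
  shows "cyc_len p n = n"
proof -
  have permutation: "permutation p"
    using perm by (auto simp: permutation_permutes)
  have "orbit p n = {1..n}"
    using cyclic cyclic_perm_iff_orbit[OF perm, of n] n by simp
  then show ?thesis
    using bij_betw_same_card[OF bij_betw_funpow_orbit[OF permutation, of n]] by simp
qed

lemma theta_cyclic:
  assumes perm: "p permutes {1..n}" and n: "1 \<le> n" and cyclic: "cyclic_perm n p"
  shows "theta n p = map (\<lambda>k. (p ^^ k) n) [0..<n]"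
proof -
  have "cycle_maxima n p = {n}"
    using cyclic cyclic_perm_iff_orbit[OF perm, of n] n
    by (simp add: cycle_maxima_eq_singleton_iff[OF perm n])
  then show ?thesis
    by (simp add: theta_def cycle_list_def cyc_len_cyclic[OF assms])
qed

lemma bij_betw_funpow_cyclic:
  assumes perm: "p permutes {1..n}" and n: "1 \<le> n" and cyclic: "cyclic_perm n p"
  shows "bij_betw (\<lambda>k. (p ^^ k) n) {..<n} {1..n}"
proof -
  have "permutation p"
    using perm by (auto simp: permutation_permutes)
  moreover have "orbit p n = {1..n}"
    using cyclic cyclic_perm_iff_orbit[OF perm, of n] n by simp
  ultimately show ?thesis
    using bij_betw_funpow_orbit[of p n] by (simp add: cyc_len_cyclic[OF assms])
qed

lemma funpow_cyclic_period:
  assumes perm: "p permutes {1..n}" and n: "1 \<le> n" and cyclic: "cyclic_perm n p"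
  shows "(p ^^ n) n = n"
proof -
  have "permutation p"
    using perm by (auto simp: permutation_permutes)
  then show ?thesis
    using funpow_cyc_len[of p n] cyc_len_cyclic[OF assms] by simp
qed

lemma distinct_theta_cyclic:
  assumes perm: "p permutes {1..n}" and n: "1 \<le> n" and cyclic: "cyclic_perm n p"
  shows "distinct (theta n p)"
  using bij_betw_funpow_cyclic[OF assms]
  by (simp add: theta_cyclic[OF assms] distinct_map bij_betw_def lessThan_atLeast0)

lemma theta_cyclic_nth_less_head:
  assumes perm: "p permutes {1..n}" and n: "1 \<le> n" and cyclic: "cyclic_perm n p"
    and k: "0 < k" "k < length (theta n p)"
  shows "theta n p ! k < theta n p ! 0"
proof -
  have bij: "bij_betw (\<lambda>k. (p ^^ k) n) {..<n} {1..n}"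
    by (rule bij_betw_funpow_cyclic[OF perm n cyclic])
  have "k < n"
    using k by (simp add: theta_cyclic[OF perm n cyclic])
  have "(p ^^ k) n \<noteq> (p ^^ 0) n"
  proof
    assume "(p ^^ k) n = (p ^^ 0) n"
    then have "k = 0"
      using inj_onD[OF bij_betw_imp_inj_on[OF bij]] \<open>k < n\<close> n by simp
    then show False
      using k by simp
  qed
  moreover have "(p ^^ k) n \<in> {1..n}"
    using bij_betw_apply[OF bij] \<open>k < n\<close> by simp
  ultimately show ?thesis
    using \<open>k < n\<close> n by (simp add: theta_cyclic[OF perm n cyclic])
qed

lemma cyclic_nestings_theta_eq_empty_iff:
  assumes perm: "p permutes {1..n}" and n: "1 \<le> n" and cyclic: "cyclic_perm n p"
  shows "cyclic_nestings (theta n p) = {} \<longleftrightarrow>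
    (\<forall>x \<in> {1..n}. \<forall>y \<in> {1..n}. \<not> nested_arcs x (p x) y (p y))"
proof -
  define f where "f k = (p ^^ k) n" for k
  have theta: "theta n p = map f [0..<n]"
    unfolding f_def by (rule theta_cyclic[OF assms])
  have succ: "theta n p ! ((a + 1) mod n) = p (f a)" if "a < n" for a
  proof -
    have "theta n p ! ((a + 1) mod n) = (p ^^ ((a + 1) mod n)) n"
      using n by (simp add: theta f_def)
    also have "\<dots> = (p ^^ (a + 1)) n"
      by (rule funpow_mod_eq[OF funpow_cyclic_period[OF assms]])
    finally show ?thesis
      by (simp add: f_def)
  qed
  have "cyclic_nestings (theta n p) =
      {(a, b). a < n \<and> b < n \<and> nested_arcs (f a) (p (f a)) (f b) (p (f b))}"
    unfolding cyclic_nestings_def using succ by (auto simp: theta)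
  then have "cyclic_nestings (theta n p) = {} \<longleftrightarrow>
      (\<forall>x \<in> f ` {..<n}. \<forall>y \<in> f ` {..<n}. \<not> nested_arcs x (p x) y (p y))"
    by blast
  moreover have "f ` {..<n} = {1..n}"
    unfolding f_def using bij_betw_funpow_cyclic[OF assms] by (rule bij_betw_imp_surj_on)
  ultimately show ?thesis
    by simp
qed

section \<open>Nested arcs and the pattern 321\<close>

lemma permutes_interval_exists_later_smaller:
  assumes perm: "p permutes {1..(n::nat)}" and y: "y \<in> {1..n}" and up: "y < p y"
  obtains z where "y < z" "z \<le> n" "p z < p y"
proof (rule ccontr)
  note found = that
  assume "\<not> thesis"
  then have no_smaller: "p y \<le> p z" if "y < z" "z \<le> n" for z
    using found[OF that] by (meson leI)
  have "p z \<in> {p y..n}" if z: "z \<in> {y..n}" for z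
  proof -
    have "p z \<le> n"
      using permutes_in_image[OF perm, of z] z y by auto
    moreover have "p y \<le> p z"
      using no_smaller z by (cases "z = y") auto
    ultimately show ?thesis
      by simp
  qed
  then have "card {y..n} \<le> card {p y..n}"
    by (intro card_inj_on_le[OF inj_on_subset[OF permutes_inj[OF perm]]]) auto
  moreover have "p y \<le> n"
    using permutes_in_image[OF perm] y by auto
  ultimately show False
    using up by simp
qed

lemma permutes_interval_exists_earlier_larger:
  assumes perm: "p permutes {1..(n::nat)}" and x: "x \<in> {1..n}" and down: "p x < x"
  obtains z where "1 \<le> z" "z < x" "p x < p z"
proof (rule ccontr)
  note found = that
  assume "\<not> thesis"
  then have no_larger: "p z \<le> p x" if "1 \<le> z" "z < x" for z
    using found[OF that] by (meson leI)
  have "p z \<in> {1..p x}" if z: "z \<in> {1..x}" for z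
  proof -
    have "1 \<le> p z"
      using permutes_in_image[OF perm, of z] z x by auto
    moreover have "p z \<le> p x"
      using no_larger z by (cases "z = x") auto
    ultimately show ?thesis
      by simp
  qed
  then have "card {1..x} \<le> card {1..p x}"
    by (intro card_inj_on_le[OF inj_on_subset[OF permutes_inj[OF perm]]]) auto
  then show False
    using down by simp
qed

lemma contains_321_iff_nested_arcs:
  assumes perm: "p permutes {1..n}" and no_fixpoint: "\<And>x. x \<in> {1..n} \<Longrightarrow> p x \<noteq> x"
  shows "contains_321 n p \<longleftrightarrow> (\<exists>x \<in> {1..n}. \<exists>y \<in> {1..n}. nested_arcs x (p x) y (p y))"
proof
  assume "contains_321 n p"
  then obtain i j k where ijk: "1 \<le> i" "i < j" "j < k" "k \<le> n" "p j < p i" "p k < p j"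
    unfolding contains_321_def by blast
  \<comment> \<open>the middle letter is not fixed, so its arc nests with the arc of the first or of the last letter\<close>
  have "p j \<noteq> j"
    using no_fixpoint ijk by simp
  then consider "j < p j" | "p j < j"
    by linarith
  then show "\<exists>x \<in> {1..n}. \<exists>y \<in> {1..n}. nested_arcs x (p x) y (p y)"
  proof cases
    case 1
    then have "nested_arcs i (p i) j (p j)"
      using ijk unfolding nested_arcs_def by auto
    then show ?thesis
      using ijk by force
  next
    case 2
    then have "nested_arcs j (p j) k (p k)"
      using ijk unfolding nested_arcs_def by auto
    then show ?thesis
      using ijk by force
  qed
next
  assume "\<exists>x \<in> {1..n}. \<exists>y \<in> {1..n}. nested_arcs x (p x) y (p y)"
  then obtain x y where x: "x \<in> {1..n}" and y: "y \<in> {1..n}" and nested: "nested_arcs x (p x) y (p y)"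
    by blast
  consider "x < y" "y < p y" "p y < p x" | "p y < p x" "p x < x" "x < y"
    using nested unfolding nested_arcs_def by blast
  then show "contains_321 n p"
  proof cases
    case 1
    obtain z where "y < z" "z \<le> n" "p z < p y"
      using permutes_interval_exists_later_smaller[OF perm y \<open>y < p y\<close>] .
    then show ?thesis
      unfolding contains_321_def using 1 x by (intro exI[of _ x] exI[of _ y] exI[of _ z]) auto
  next
    case 2
    obtain z where "1 \<le> z" "z < x" "p x < p z"
      using permutes_interval_exists_earlier_larger[OF perm x \<open>p x < x\<close>] .
    then show ?thesis
      unfolding contains_321_def using 2 y by (intro exI[of _ z] exI[of _ x] exI[of _ y]) auto
  qed
qed

lemma cyclic_perm_no_fixpoint:
  assumes perm: "p permutes {1..n}" and cyclic: "cyclic_perm n p" and n: "2 \<le> n"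
    and x: "x \<in> {1..n}"
  shows "p x \<noteq> x"
proof
  assume "p x = x"
  then have "{1..n} = {x}"
    using cyclic cyclic_perm_iff_orbit[OF perm x] orbit_eq_singleton_iff[of p x] by simp
  moreover have "1 \<in> {1..n}" "n \<in> {1..n}"
    using n by auto
  ultimately show False
    using n by simp
qed

lemma cyclic_perm_contains_321_iff:
  assumes perm: "p permutes {1..n}" and cyclic: "cyclic_perm n p"
  shows "contains_321 n p \<longleftrightarrow> (\<exists>x \<in> {1..n}. \<exists>y \<in> {1..n}. nested_arcs x (p x) y (p y))"
proof (cases "2 \<le> n")
  case True
  then show ?thesis
    using cyclic_perm_no_fixpoint[OF perm cyclic True] contains_321_iff_nested_arcs[OF perm] by blast
next
  case False
  then show ?thesis
    unfolding contains_321_def nested_arcs_def by auto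
qed

theorem mainTheorem3:
  fixes n :: nat and p :: "nat \<Rightarrow> nat"
  assumes "n \<ge> 1" and "p permutes {1..n}"
  defines "w \<equiv> theta n p"
  shows "((cyclic_perm n p \<and> \<not> contains_321 n p) \<longleftrightarrow>
           (w ! 0 = n \<and>
            int (N_2_31 w) + int (N_14_23 w) + int (N_41_32 w)
              - int (N_24_13 w) - int (N_31_42 w) = 0))
       \<and> ((cyclic_perm n p \<and> \<not> contains_321 n p) \<longleftrightarrow>
           (w ! 0 = n \<and>
            int (N_231 w) + int (N_23_41 w) + int (N_24_31 w) + int (N_32_41 w)
              + int (N_14_23 w) + int (N_41_32 w) - int (N_24_13 w) = 0))"
proof -
  note n = assms(1) and perm = assms(2)
  have "w ! 0 = n \<longleftrightarrow> cyclic_perm n p"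
    unfolding w_def by (rule theta_nth_0_eq_iff_cyclic[OF perm n])
  moreover have "int (N_2_31 w) + int (N_14_23 w) + int (N_41_32 w) - int (N_24_13 w) - int (N_31_42 w)
      = int (card (cyclic_nestings w))
    \<and> int (N_231 w) + int (N_23_41 w) + int (N_24_31 w) + int (N_32_41 w)
      + int (N_14_23 w) + int (N_41_32 w) - int (N_24_13 w) = int (card (cyclic_nestings w))
    \<and> (card (cyclic_nestings w) = 0 \<longleftrightarrow> \<not> contains_321 n p)"
    if cyclic: "cyclic_perm n p"
  proof -
    have "distinct w" "\<And>k. 0 < k \<Longrightarrow> k < length w \<Longrightarrow> w ! k < w ! 0"
      unfolding w_def using distinct_theta_cyclic theta_cyclic_nth_less_head perm n cyclic by blast+
    moreover have "card (cyclic_nestings w) = 0 \<longleftrightarrow> \<not> contains_321 n p"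
      using cyclic_nestings_theta_eq_empty_iff[OF perm n cyclic] cyclic_perm_contains_321_iff[OF perm cyclic]
      by (simp add: w_def finite_cyclic_nestings)
    ultimately show ?thesis
      using statistics_eq_card_cyclic_nestings by blast
  qed
  ultimately show ?thesis
    by auto
qed

end
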